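(* Let $\mu$ be a smooth volume form on $S^2$ and let $G$ be an abelian pseudo-rotation subgroup of $\mathrm{Symp}^\infty_\mu(S^2)$. Then either $\mathrm{Fix}(g)$ is the same set for every non-trivial $g\in G$, or $G$ is isomorphic to $\mathbb{Z}/2\mathbb{Z}\oplus\mathbb{Z}/2\mathbb{Z}$. In the latter case the fixed point sets of the non-trivial elements of $G$ are pairwise disjoint, so their union contains six points.
   Context: $\mathrm{Symp}^\infty_\mu(S^2)$ is the group of $C^\infty$ diffeomorphisms of $S^2$ isotopic to the identity and preserving $\mu$. A subgroup is a pseudo-rotation group if every non-trivial element has exactly $2$ fixed points. *)

theory Defs
  imports "HOL-Analysis.Analysis" "HOL-Algebra.Algebra"
begin

abbreviation S2 :: "(real^3) set" where "S2 \<equiv> sphere 0 1"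

fun Ck_on :: "nat \<Rightarrow> 'a::real_normed_vector set \<Rightarrow> ('a \<Rightarrow> 'b::real_normed_vector) \<Rightarrow> bool" where
  "Ck_on 0 U f = continuous_on U f"
| "Ck_on (Suc k) U f = (f differentiable_on U \<and>
      (\<forall>v. Ck_on k U (\<lambda>x. frechet_derivative f (at x) v)))"

definition smooth_on :: "'a::real_normed_vector set \<Rightarrow> ('a \<Rightarrow> 'b::real_normed_vector) \<Rightarrow> bool" where
  "smooth_on U f \<longleftrightarrow> (\<forall>k. Ck_on k U f)"

definition smooth_ext :: "(real^3) set \<Rightarrow> (real^3 \<Rightarrow> 'b::real_normed_vector) \<Rightarrow> (real^3 \<Rightarrow> 'b) \<Rightarrow> bool" where
  "smooth_ext U F f \<longleftrightarrow> open U \<and> S2 \<subseteq> U \<and> smooth_on U F \<and> (\<forall>x\<in>S2. F x = f x)"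

definition smooth_S2 :: "(real^3 \<Rightarrow> 'b::real_normed_vector) \<Rightarrow> bool" where
  "smooth_S2 f \<longleftrightarrow> (\<exists>U F. smooth_ext U F f)"

definition diffeo_S2 :: "(real^3 \<Rightarrow> real^3) \<Rightarrow> bool" where
  "diffeo_S2 f \<longleftrightarrow> bij_betw f S2 S2 \<and> smooth_S2 f \<and> smooth_S2 (inv_into S2 f)"

text \<open>Standard area form of S^2: omega_x(u,v) = det[x,u,v] = x . (u x v).
  A smooth volume form mu on S^2 is rho * omega with rho smooth and nowhere zero.\<close>
definition volume_density :: "(real^3 \<Rightarrow> real) \<Rightarrow> bool" where
  "volume_density \<rho> \<longleftrightarrow> smooth_S2 \<rho> \<and> (\<forall>x\<in>S2. \<rho> x \<noteq> 0)"

text \<open>f^* mu = mu, with the derivative on tangent vectors computed from a smooth extension.\<close>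
definition preserves_form :: "(real^3 \<Rightarrow> real) \<Rightarrow> (real^3 \<Rightarrow> real^3) \<Rightarrow> bool" where
  "preserves_form \<rho> f \<longleftrightarrow> (\<exists>U F. smooth_ext U F f \<and>
     (\<forall>x\<in>S2. \<forall>u v. u \<bullet> x = 0 \<longrightarrow> v \<bullet> x = 0 \<longrightarrow>
        \<rho> (f x) * (f x \<bullet> cross3 (frechet_derivative F (at x) u) (frechet_derivative F (at x) v))
        = \<rho> x * (x \<bullet> cross3 u v)))"

definition isotopic_to_id :: "(real^3 \<Rightarrow> real^3) \<Rightarrow> bool" where
  "isotopic_to_id f \<longleftrightarrow> (\<exists>H :: real \<Rightarrow> real^3 \<Rightarrow> real^3.
     continuous_on ({0..1} \<times> S2) (\<lambda>(t,x). H t x) \<and>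
     (\<forall>t\<in>{0..1}. diffeo_S2 (H t)) \<and>
     (\<forall>x\<in>S2. H 0 x = x \<and> H 1 x = f x))"

text \<open>The group Symp^infty_mu(S^2); maps are normalised to be extensional on S^2.\<close>
definition Symp :: "(real^3 \<Rightarrow> real) \<Rightarrow> (real^3 \<Rightarrow> real^3) monoid" where
  "Symp \<rho> = \<lparr>carrier = {f. f \<in> extensional S2 \<and> diffeo_S2 f \<and> preserves_form \<rho> f \<and> isotopic_to_id f},
            monoid.mult = (\<lambda>g f. compose S2 g f),
            one = restrict id S2\<rparr>"

definition Fix :: "(real^3 \<Rightarrow> real^3) \<Rightarrow> (real^3) set" where
  "Fix g = {x \<in> S2. g x = x}"

definition pseudo_rotation_group :: "(real^3 \<Rightarrow> real) \<Rightarrow> (real^3 \<Rightarrow> real^3) set \<Rightarrow> bool" where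
  "pseudo_rotation_group \<rho> G \<longleftrightarrow> subgroup G (Symp \<rho>) \<and>
     (\<forall>g\<in>G. g \<noteq> \<one>\<^bsub>Symp \<rho>\<^esub> \<longrightarrow> finite (Fix g) \<and> card (Fix g) = 2)"

end

theory Submission
  imports Defs
begin

text \<open>Every element of G permutes the two fixed points of every other element. If two non-trivial
  elements g, h have different fixed point sets, h therefore swaps the fixed points of g, so h \<circ> h
  fixes four points and is trivial. Two commuting involutions of Symp with a common fixed point a and
  finitely many fixed points both act as -1 on the tangent plane at a (an area-preserving involution
  acting as the identity there would fix a whole neighbourhood of a), so their product acts as the
  identity there and, being an involution itself, is trivial. Hence distinct non-trivial elements have
  disjoint fixed point sets, which forces G = {1, g, h, gh}.\<close>

section \<open>Derivatives at fixed points on the sphere\<close>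

lemma great_circle_in_S2:
  fixes a e :: "real^3"
  assumes a: "a \<in> S2" and e: "e \<bullet> e = 1" "e \<bullet> a = 0"
  shows "cos t *\<^sub>R a + sin t *\<^sub>R e \<in> S2"
proof -
  have "a \<bullet> a = 1" using a by (simp add: dot_square_norm)
  have "(cos t *\<^sub>R a + sin t *\<^sub>R e) \<bullet> (cos t *\<^sub>R a + sin t *\<^sub>R e)
      = (cos t)\<^sup>2 * (a \<bullet> a) + 2 * cos t * sin t * (e \<bullet> a) + (sin t)\<^sup>2 * (e \<bullet> e)"
    by (simp add: inner_add_left inner_add_right inner_commute power2_eq_square algebra_simps)
  also have "\<dots> = 1" using e \<open>a \<bullet> a = 1\<close> by simp
  finally show ?thesis by (simp add: dot_square_norm norm_eq_1)
qed

lemma unit_orthogonal_exists: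
  fixes a :: "real^3"
  obtains e where "e \<bullet> e = 1" "e \<bullet> a = 0"
proof -
  obtain y :: "real^3" where y: "y \<noteq> 0" "orthogonal a y"
    using orthogonal_to_vector_exists[of a] by auto
  show ?thesis
    by (rule that[of "y /\<^sub>R norm y"])
      (use y in \<open>simp_all add: dot_square_norm power2_eq_square orthogonal_def inner_commute\<close>)
qed

lemma infinite_S2_near:
  assumes a: "a \<in> S2" and d: "d > 0"
  shows "infinite {x \<in> S2. dist x a < d}"
proof -
  obtain e where e: "e \<bullet> e = 1" "e \<bullet> a = 0" using unit_orthogonal_exists by blast
  define \<gamma> where "\<gamma> = (\<lambda>t::real. cos t *\<^sub>R a + sin t *\<^sub>R e)"
  have \<gamma>_a: "\<gamma> t \<bullet> a = cos t" for t
    using e a by (simp add: \<gamma>_def inner_add_left dot_square_norm)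
  have "continuous (at 0) \<gamma>" unfolding \<gamma>_def by (intro continuous_intros)
  then obtain \<eta> where \<eta>: "\<eta> > 0" "\<And>t. dist t 0 < \<eta> \<Longrightarrow> dist (\<gamma> t) (\<gamma> 0) < d"
    using d unfolding continuous_at_eps_delta by blast
  define T where "T = {0<..<min \<eta> pi}"
  have "inj_on \<gamma> T"
  proof
    fix s t assume "s \<in> T" "t \<in> T" "\<gamma> s = \<gamma> t"
    then have "cos s = cos t" using \<gamma>_a by metis
    then show "s = t" using \<open>s \<in> T\<close> \<open>t \<in> T\<close> cos_inj_pi by (auto simp: T_def)
  qed
  moreover have "infinite T" using \<eta> pi_gt_zero by (simp add: T_def)
  ultimately have "infinite (\<gamma> ` T)" using finite_imageD by blast
  moreover have "\<gamma> ` T \<subseteq> {x \<in> S2. dist x a < d}"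
    using great_circle_in_S2[OF a e] \<eta> by (auto simp: T_def dist_real_def \<gamma>_def)
  ultimately show ?thesis using finite_subset by blast
qed

lemma has_derivative_unique_on_tangent:
  fixes A B :: "real^3 \<Rightarrow> 'b::real_normed_vector"
  assumes a: "a \<in> S2" and u: "u \<bullet> a = 0"
    and dA: "(A has_derivative A') (at a)" and dB: "(B has_derivative B') (at a)"
    and eq: "\<And>x. x \<in> S2 \<Longrightarrow> A x = B x"
  shows "A' u = B' u"
proof (cases "u = 0")
  case True
  then show ?thesis using dA dB by (simp add: has_derivative_linear linear_0)
next
  case False
  define e where "e = u /\<^sub>R norm u"
  have e: "e \<bullet> e = 1" "e \<bullet> a = 0"
    using False u by (simp_all add: e_def dot_square_norm power2_eq_square)
  define \<gamma> where "\<gamma> = (\<lambda>t::real. cos t *\<^sub>R a + sin t *\<^sub>R e)"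
  have "(\<gamma> has_vector_derivative (- sin 0 *\<^sub>R a + cos 0 *\<^sub>R e)) (at 0)"
    unfolding \<gamma>_def by (auto intro!: derivative_eq_intros)
  then have d\<gamma>: "(\<gamma> has_derivative (\<lambda>t. t *\<^sub>R e)) (at 0)"
    by (simp add: has_vector_derivative_def)
  have \<gamma>0: "\<gamma> 0 = a" by (simp add: \<gamma>_def)
  have "((A \<circ> \<gamma>) has_derivative (A' \<circ> (\<lambda>t. t *\<^sub>R e))) (at 0)"
    using has_derivative_compose[OF d\<gamma>] dA \<gamma>0 by (simp add: o_def)
  moreover have "((A \<circ> \<gamma>) has_derivative (B' \<circ> (\<lambda>t. t *\<^sub>R e))) (at 0)"
  proof -
    have "((B \<circ> \<gamma>) has_derivative (B' \<circ> (\<lambda>t. t *\<^sub>R e))) (at 0)"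
      using has_derivative_compose[OF d\<gamma>] dB \<gamma>0 by (simp add: o_def)
    moreover have "B \<circ> \<gamma> = A \<circ> \<gamma>"
      using eq great_circle_in_S2[OF a e] by (auto simp: fun_eq_iff \<gamma>_def)
    ultimately show ?thesis by simp
  qed
  ultimately have "A' \<circ> (\<lambda>t. t *\<^sub>R e) = B' \<circ> (\<lambda>t. t *\<^sub>R e)"
    by (rule has_derivative_unique)
  then have "A' e = B' e" by (metis comp_apply scaleR_one)
  moreover have "u = norm u *\<^sub>R e" using False by (simp add: e_def)
  moreover have "linear A'" "linear B'" using dA dB has_derivative_linear by blast+
  ultimately show ?thesis by (metis linear_scale)
qed

lemma has_derivative_locally_injective_continuous:
  fixes f :: "'a::euclidean_space \<Rightarrow> 'b::euclidean_space"
  assumes "a \<in> S" "open S" "bounded_linear g'" "g' \<circ> f' a = id"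
    and derf: "\<And>x. x \<in> S \<Longrightarrow> (f has_derivative f' x) (at x)"
    and cont: "\<And>v. continuous_on S (\<lambda>x. f' x v)"
  obtains r where "r > 0" "ball a r \<subseteq> S" "inj_on f (ball a r)"
proof (rule has_derivative_locally_injective[OF assms(1-4) derf])
  fix e :: real assume e: "e > 0"
  define \<phi> where "\<phi> = (\<lambda>x. \<Sum>i\<in>Basis. norm (f' x i - f' a i))"
  have "continuous_on S \<phi>" unfolding \<phi>_def by (intro continuous_intros cont)
  then have "continuous (at a) \<phi>" using assms(1,2) continuous_on_eq_continuous_at by blast
  moreover have "\<phi> a = 0" by (simp add: \<phi>_def)
  ultimately obtain d1 where d1: "d1 > 0" "\<And>x. dist x a < d1 \<Longrightarrow> \<phi> x < e"
    using e unfolding continuous_at_eps_delta by (metis dist_real_def abs_less_iff diff_zero)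
  obtain d2 where d2: "d2 > 0" "ball a d2 \<subseteq> S" using assms(1,2) open_contains_ball by blast
  show "\<exists>d>0. \<forall>x. dist a x < d \<longrightarrow> onorm (\<lambda>v. f' x v - f' a v) < e"
  proof (intro exI[of _ "min d1 d2"] conjI allI impI)
    fix x assume x: "dist a x < min d1 d2"
    then have "x \<in> S" using d2 by auto
    then have "bounded_linear (\<lambda>v. f' x v - f' a v)"
      using derf assms(1) by (intro bounded_linear_sub has_derivative_bounded_linear)
    then have "onorm (\<lambda>v. f' x v - f' a v) \<le> \<phi> x"
      unfolding \<phi>_def by (rule onorm_componentwise)
    also have "\<phi> x < e" using d1 x by (simp add: dist_commute)
    finally show "onorm (\<lambda>v. f' x v - f' a v) < e" .
  qed (use d1 d2 in simp)
qed

lemma smooth_extD: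
  assumes "smooth_ext U F f"
  shows "open U" "S2 \<subseteq> U" "\<And>x. x \<in> S2 \<Longrightarrow> F x = f x"
  using assms by (auto simp: smooth_ext_def)

lemma smooth_ext_has_derivative:
  assumes "smooth_ext U F f" "x \<in> U"
  shows "(F has_derivative frechet_derivative F (at x)) (at x)"
proof -
  have "F differentiable_on U"
    using assms(1) Ck_on.simps(2)[of 0 U F] by (simp add: smooth_ext_def smooth_on_def)
  then show ?thesis
    using assms smooth_extD(1) differentiable_on_eq_differentiable_at frechet_derivative_works
    by blast
qed

lemma smooth_ext_continuous_derivative:
  assumes "smooth_ext U F f"
  shows "continuous_on U (\<lambda>x. frechet_derivative F (at x) v)"
  using assms Ck_on.simps(2)[of 0 U F] by (simp add: smooth_ext_def smooth_on_def)

lemma derivative_tangent_at_fixpoint: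
  assumes ext: "smooth_ext U F f" and fS: "\<And>x. x \<in> S2 \<Longrightarrow> f x \<in> S2"
    and a: "a \<in> S2" and fa: "f a = a" and u: "u \<bullet> a = 0"
  shows "frechet_derivative F (at a) u \<bullet> a = 0"
proof -
  define D where "D = frechet_derivative F (at a)"
  have dF: "(F has_derivative D) (at a)"
    using smooth_ext_has_derivative[OF ext] smooth_extD(2)[OF ext] a by (auto simp: D_def)
  have Fa: "F a = a" using smooth_extD(3)[OF ext a] fa by simp
  have "F a \<bullet> D u + D u \<bullet> F a = 0"
  proof (rule has_derivative_unique_on_tangent[OF a u has_derivative_inner[OF dF dF]])
    show "((\<lambda>x. 1::real) has_derivative (\<lambda>h. 0)) (at a)" by simp
    show "\<And>x. x \<in> S2 \<Longrightarrow> F x \<bullet> F x = 1"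
      using smooth_extD(3)[OF ext] fS by (simp add: dot_square_norm)
  qed
  then show ?thesis using Fa by (simp add: D_def inner_commute)
qed

lemma derivative_involution_at_fixpoint:
  assumes ext: "smooth_ext U F f" and fS: "\<And>x. x \<in> S2 \<Longrightarrow> f x \<in> S2"
    and ff: "\<And>x. x \<in> S2 \<Longrightarrow> f (f x) = x"
    and a: "a \<in> S2" and fa: "f a = a" and u: "u \<bullet> a = 0"
  shows "frechet_derivative F (at a) (frechet_derivative F (at a) u) = u"
proof -
  define D where "D = frechet_derivative F (at a)"
  have dF: "(F has_derivative D) (at a)"
    using smooth_ext_has_derivative[OF ext] smooth_extD(2)[OF ext] a by (auto simp: D_def)
  have "F a = a" using smooth_extD(3)[OF ext a] fa by simp
  then have "((F \<circ> F) has_derivative (D \<circ> D)) (at a)"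
    using has_derivative_compose[OF dF, of F D] dF by (simp add: o_def)
  then have "(D \<circ> D) u = id u"
    by (rule has_derivative_unique_on_tangent[OF a u _ has_derivative_id])
      (use smooth_extD(3)[OF ext] fS ff in simp)
  then show ?thesis by (simp add: D_def)
qed

lemma derivative_compose_at_fixpoint:
  assumes extk: "smooth_ext Uk K k" and extg: "smooth_ext Ug G g" and extq: "smooth_ext Uq Q q"
    and q: "\<And>x. x \<in> S2 \<Longrightarrow> q x = k (g x)" and gS: "\<And>x. x \<in> S2 \<Longrightarrow> g x \<in> S2"
    and a: "a \<in> S2" and ga: "g a = a" and u: "u \<bullet> a = 0"
  shows "frechet_derivative Q (at a) u = frechet_derivative K (at a) (frechet_derivative G (at a) u)"
proof -
  have dG: "(G has_derivative frechet_derivative G (at a)) (at a)"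
    using smooth_ext_has_derivative[OF extg] smooth_extD(2)[OF extg] a by blast
  have dK: "(K has_derivative frechet_derivative K (at a)) (at a)"
    using smooth_ext_has_derivative[OF extk] smooth_extD(2)[OF extk] a by blast
  have dQ: "(Q has_derivative frechet_derivative Q (at a)) (at a)"
    using smooth_ext_has_derivative[OF extq] smooth_extD(2)[OF extq] a by blast
  have "G a = a" using smooth_extD(3)[OF extg a] ga by simp
  then have "((K \<circ> G) has_derivative (frechet_derivative K (at a) \<circ> frechet_derivative G (at a))) (at a)"
    using has_derivative_compose[OF dG, of K] dK by (simp add: o_def)
  then have "frechet_derivative Q (at a) u = (frechet_derivative K (at a) \<circ> frechet_derivative G (at a)) u"
    by (rule has_derivative_unique_on_tangent[OF a u dQ])
      (use smooth_extD(3)[OF extq] smooth_extD(3)[OF extk] smooth_extD(3)[OF extg] gS q in simp)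
  then show ?thesis by simp
qed

lemma infinite_Fix_if_tangent_derivative_id:
  assumes ext: "smooth_ext U F f" and fS: "\<And>x. x \<in> S2 \<Longrightarrow> f x \<in> S2"
    and ff: "\<And>x. x \<in> S2 \<Longrightarrow> f (f x) = x"
    and a: "a \<in> S2" and fa: "f a = a"
    and D_id: "\<And>u. u \<bullet> a = 0 \<Longrightarrow> frechet_derivative F (at a) u = u"
  shows "infinite (Fix f)"
proof -
  define D where "D = (\<lambda>z. frechet_derivative F (at z))"
  have aU: "a \<in> U" using smooth_extD(2)[OF ext] a by blast
  have dF: "\<And>z. z \<in> U \<Longrightarrow> (F has_derivative D z) (at z)"
    using smooth_ext_has_derivative[OF ext] by (simp add: D_def)
  txt \<open>On S2 the map \<Psi> is symmetric under x \<leftrightarrow> f x; the correction term, which vanishes on S2,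
    makes its derivative at a equal to 2 in the normal direction too, so \<Psi> is injective near a.\<close>
  define v where "v = (1/2) *\<^sub>R (a - D a a)"
  define \<Psi> where "\<Psi> = (\<lambda>x. x + F x + (x \<bullet> x - 1) *\<^sub>R v)"
  define \<Psi>' where "\<Psi>' = (\<lambda>z w. w + D z w + (z \<bullet> w + w \<bullet> z) *\<^sub>R v)"
  have \<Psi>'a: "\<Psi>' a w = 2 *\<^sub>R w" for w
  proof -
    define s where "s = w \<bullet> a"
    define t where "t = w - s *\<^sub>R a"
    have "t \<bullet> a = 0" using a by (simp add: t_def s_def inner_diff_left dot_square_norm)
    have w: "w = t + s *\<^sub>R a" by (simp add: t_def)
    have "linear (D a)" using dF[OF aU] has_derivative_linear by blast
    then have "D a w = D a t + s *\<^sub>R D a a" using w by (metis linear_add linear_scale)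
    then have Dw: "D a w = t + s *\<^sub>R D a a" using D_id[OF \<open>t \<bullet> a = 0\<close>] by (simp add: D_def)
    have "\<Psi>' a w = w + D a w + (2 * s) *\<^sub>R v" by (simp add: \<Psi>'_def s_def inner_commute)
    also have "\<dots> = w + (t + s *\<^sub>R D a a) + (2 * s) *\<^sub>R v" by (simp only: Dw)
    also have "\<dots> = 2 *\<^sub>R w" by (simp add: w v_def vec_eq_iff algebra_simps)
    finally show ?thesis .
  qed
  obtain r where r: "r > 0" "ball a r \<subseteq> U" "inj_on \<Psi> (ball a r)"
  proof (rule has_derivative_locally_injective_continuous[OF aU smooth_extD(1)[OF ext]])
    show "bounded_linear (\<lambda>w. (1/2::real) *\<^sub>R w)" by (simp add: bounded_linear_scaleR_right)
    show "(\<lambda>w. (1/2::real) *\<^sub>R w) \<circ> \<Psi>' a = id" by (auto simp: \<Psi>'a fun_eq_iff)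
    show "\<And>x. x \<in> U \<Longrightarrow> (\<Psi> has_derivative \<Psi>' x) (at x)"
      unfolding \<Psi>_def \<Psi>'_def by (auto intro!: derivative_eq_intros dF)
    show "\<And>w. continuous_on U (\<lambda>x. \<Psi>' x w)"
      unfolding \<Psi>'_def D_def by (intro continuous_intros smooth_ext_continuous_derivative[OF ext])
  qed
  have "continuous (at a) F" using dF[OF aU] has_derivative_continuous by blast
  then obtain \<delta> where \<delta>: "\<delta> > 0" "\<And>x. dist x a < \<delta> \<Longrightarrow> dist (F x) (F a) < r"
    using r(1) unfolding continuous_at_eps_delta by blast
  have "{x \<in> S2. dist x a < min \<delta> r} \<subseteq> Fix f"
  proof safe
    fix x assume x: "x \<in> S2" "dist x a < min \<delta> r"
    have "F a = a" using smooth_extD(3)[OF ext a] fa by simp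
    then have "x \<in> ball a r" "f x \<in> ball a r"
      using \<delta>(2)[of x] x smooth_extD(3)[OF ext x(1)] by (simp_all add: dist_commute)
    moreover have "\<Psi> (f x) = \<Psi> x"
      using x(1) fS[OF x(1)] smooth_extD(3)[OF ext] ff[OF x(1)]
      by (simp add: \<Psi>_def dot_square_norm)
    ultimately have "f x = x" using r(3) by (meson inj_onD)
    then show "x \<in> Fix f" using x(1) by (simp add: Fix_def)
  qed
  then show ?thesis using infinite_S2_near[OF a, of "min \<delta> r"] \<delta>(1) r(1) finite_subset by auto
qed

lemma cross3_tangent_eq_0:
  fixes a e1 e2 :: "real^3"
  assumes "e1 \<bullet> a = 0" "e2 \<bullet> a = 0" "a \<bullet> a = 1" "a \<bullet> cross3 e1 e2 = 0"
  shows "cross3 e1 e2 = 0"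
proof -
  have "cross3 a (cross3 e1 e2) = (a \<bullet> e2) *\<^sub>R e1 - (a \<bullet> e1) *\<^sub>R e2"
    by (simp add: cross3_simps forall_3)
  then have "cross3 a (cross3 e1 e2) = 0" using assms(1,2) by (simp add: inner_commute)
  moreover have "cross3 a (cross3 a (cross3 e1 e2)) = (a \<bullet> cross3 e1 e2) *\<^sub>R a - (a \<bullet> a) *\<^sub>R cross3 e1 e2"
    by (simp add: cross3_simps forall_3)
  ultimately show ?thesis using assms(3,4) by simp
qed

text \<open>If D u \<noteq> -u, then u + D u and v - D v are eigenvectors for 1 and -1 spanning the tangent
  plane, so D would reverse the area form.\<close>
lemma tangent_involution_eq_minus:
  fixes D :: "real^3 \<Rightarrow> real^3"
  assumes lin: "linear D" and aa: "a \<bullet> a = 1"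
    and tangent: "\<And>w. w \<bullet> a = 0 \<Longrightarrow> D w \<bullet> a = 0"
    and invol: "\<And>w. w \<bullet> a = 0 \<Longrightarrow> D (D w) = w"
    and area: "\<And>u v. u \<bullet> a = 0 \<Longrightarrow> v \<bullet> a = 0 \<Longrightarrow> a \<bullet> cross3 (D u) (D v) = a \<bullet> cross3 u v"
    and v: "v \<bullet> a = 0" "D v \<noteq> v" and u: "u \<bullet> a = 0"
  shows "D u = - u"
proof (rule ccontr)
  assume "D u \<noteq> - u"
  define e1 where "e1 = u + D u"
  define e2 where "e2 = v - D v"
  have e1n: "e1 \<noteq> 0" using \<open>D u \<noteq> - u\<close> by (auto simp: e1_def add_eq_0_iff)
  have e2n: "e2 \<noteq> 0" using v by (simp add: e2_def)
  have e1a: "e1 \<bullet> a = 0" using u tangent by (simp add: e1_def inner_add_left)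
  have e2a: "e2 \<bullet> a = 0" using v tangent by (simp add: e2_def inner_diff_left)
  have De1: "D e1 = e1" using invol[OF u] lin by (simp add: e1_def linear_add)
  have De2: "D e2 = - e2" using invol[OF v(1)] lin by (simp add: e2_def linear_diff)
  have "a \<bullet> cross3 e1 (- e2) = a \<bullet> cross3 e1 e2" using area[OF e1a e2a] De1 De2 by simp
  then have "cross3 e1 e2 = 0" using cross3_tangent_eq_0 e1a e2a aa by simp
  then obtain c where "e2 = c *\<^sub>R e1" using e1n e2n cross_eq_0 collinear_lemma by blast
  then have "D e2 = e2" using De1 lin by (simp add: linear_scale)
  then show False using De2 e2n by (simp add: vec_eq_iff)
qed

lemma tangent_derivative_eq_minus:
  assumes ext: "smooth_ext U F f" and fS: "\<And>x. x \<in> S2 \<Longrightarrow> f x \<in> S2"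
    and ff: "\<And>x. x \<in> S2 \<Longrightarrow> f (f x) = x"
    and a: "a \<in> S2" and fa: "f a = a" and fin: "finite (Fix f)"
    and area: "\<And>u v. u \<bullet> a = 0 \<Longrightarrow> v \<bullet> a = 0 \<Longrightarrow>
       a \<bullet> cross3 (frechet_derivative F (at a) u) (frechet_derivative F (at a) v) = a \<bullet> cross3 u v"
    and u: "u \<bullet> a = 0"
  shows "frechet_derivative F (at a) u = - u"
proof -
  obtain v where v: "v \<bullet> a = 0" "frechet_derivative F (at a) v \<noteq> v"
    using infinite_Fix_if_tangent_derivative_id[OF ext fS ff a fa] fin by blast
  show ?thesis
  proof (rule tangent_involution_eq_minus[OF _ _ _ _ area v u])
    show "linear (frechet_derivative F (at a))"
      using smooth_ext_has_derivative[OF ext] smooth_extD(2)[OF ext] a has_derivative_linear by blast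
    show "a \<bullet> a = 1" using a by (simp add: dot_square_norm)
    show "\<And>w. w \<bullet> a = 0 \<Longrightarrow> frechet_derivative F (at a) w \<bullet> a = 0"
      by (rule derivative_tangent_at_fixpoint[OF ext fS a fa])
    show "\<And>w. w \<bullet> a = 0 \<Longrightarrow> frechet_derivative F (at a) (frechet_derivative F (at a) w) = w"
      by (rule derivative_involution_at_fixpoint[OF ext fS ff a fa])
  qed
qed

lemma (in comm_group) Klein_four_iso:
  assumes g: "g \<in> carrier G" and h: "h \<in> carrier G"
    and gh_ne: "g \<noteq> \<one>" "h \<noteq> \<one>" "g \<noteq> h"
    and gg: "g \<otimes> g = \<one>" and hh: "h \<otimes> h = \<one>"
    and carrier_eq: "carrier G = {\<one>, g, h, g \<otimes> h}"
  shows "G \<cong> DirProd (integer_mod_group 2) (integer_mod_group 2)"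
proof -
  define \<phi> where "\<phi> = (\<lambda>(i::int, j::int). (if i = 0 then \<one> else g) \<otimes> (if j = 0 then \<one> else h))"
  have Z2: "carrier (integer_mod_group 2) = {0,1}"
    by (auto simp: carrier_integer_mod_group)
  have gh_inv: "g \<otimes> (g \<otimes> h) = h" "h \<otimes> (g \<otimes> h) = g"
    using g h gg hh by (simp add: m_assoc[symmetric], simp add: m_lcomm[of h g h])
  have "g \<otimes> h \<otimes> g = h" "g \<otimes> h \<otimes> h = g" "h \<otimes> g = g \<otimes> h" "g \<otimes> h \<otimes> (g \<otimes> h) = \<one>"
    using g h gg hh gh_inv by (simp_all add: m_assoc m_comm[of h g])
  then have hom: "\<phi> \<in> hom (DirProd (integer_mod_group 2) (integer_mod_group 2)) G"
    unfolding hom_def using g h gg hh gh_inv by (auto simp: Z2 \<phi>_def)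
  have "g \<otimes> h \<noteq> \<one>" "g \<otimes> h \<noteq> g" "g \<otimes> h \<noteq> h"
    using g gg hh gh_ne gh_inv by auto
  then have "bij_betw \<phi> ({0,1} \<times> {0,1}) (carrier G)"
    unfolding bij_betw_def inj_on_def carrier_eq using gh_ne g h by (auto simp: \<phi>_def)
  with hom have "integer_mod_group 2 \<times>\<times> integer_mod_group 2 \<cong> G"
    unfolding is_iso_def iso_def by (auto simp: Z2)
  then show ?thesis
    using group.iso_sym[OF DirProd_group[OF group_integer_mod_group group_integer_mod_group]] by blast
qed

section \<open>Commuting involutions in Symp\<close>

lemma one_Symp: "\<one>\<^bsub>Symp \<rho>\<^esub> = restrict id S2"
  by (simp add: Symp_def)

lemma one_Symp_apply: "x \<in> S2 \<Longrightarrow> \<one>\<^bsub>Symp \<rho>\<^esub> x = x"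
  by (simp add: one_Symp)

lemma mult_Symp: "g \<otimes>\<^bsub>Symp \<rho>\<^esub> h = compose S2 g h"
  by (simp add: Symp_def)

lemma carrier_SympD:
  assumes "f \<in> carrier (Symp \<rho>)"
  shows "f \<in> extensional S2" "bij_betw f S2 S2" "preserves_form \<rho> f"
  using assms by (auto simp: Symp_def diffeo_S2_def)

lemma Fix_subset_S2: "Fix g \<subseteq> S2"
  by (auto simp: Fix_def)

lemma card_2_eq_doubleton: "card A = 2 \<Longrightarrow> x \<in> A \<Longrightarrow> y \<in> A \<Longrightarrow> x \<noteq> y \<Longrightarrow> A = {x, y}"
  by (auto simp: card_2_iff)

lemma preserves_form_at_fixpoint:
  assumes "preserves_form \<rho> f" "volume_density \<rho>" "a \<in> S2" "f a = a"
  obtains U F where "smooth_ext U F f"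
    "\<And>u v. u \<bullet> a = 0 \<Longrightarrow> v \<bullet> a = 0 \<Longrightarrow>
       a \<bullet> cross3 (frechet_derivative F (at a) u) (frechet_derivative F (at a) v) = a \<bullet> cross3 u v"
proof -
  obtain U F where ext: "smooth_ext U F f" and pf: "\<forall>x\<in>S2. \<forall>u v. u \<bullet> x = 0 \<longrightarrow> v \<bullet> x = 0 \<longrightarrow>
        \<rho> (f x) * (f x \<bullet> cross3 (frechet_derivative F (at x) u) (frechet_derivative F (at x) v))
        = \<rho> x * (x \<bullet> cross3 u v)"
    using assms(1) unfolding preserves_form_def by blast
  have "\<rho> a \<noteq> 0" using assms(2,3) by (simp add: volume_density_def)
  show ?thesis
  proof (rule that[OF ext])
    fix u v :: "real^3" assume "u \<bullet> a = 0" "v \<bullet> a = 0"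
    then have "\<rho> a * (a \<bullet> cross3 (frechet_derivative F (at a) u) (frechet_derivative F (at a) v))
        = \<rho> a * (a \<bullet> cross3 u v)" using pf assms(3,4) by metis
    then show "a \<bullet> cross3 (frechet_derivative F (at a) u) (frechet_derivative F (at a) v) = a \<bullet> cross3 u v"
      using \<open>\<rho> a \<noteq> 0\<close> by simp
  qed
qed

lemma Symp_involutions_common_fixpoint_eq:
  assumes vd: "volume_density \<rho>"
    and kC: "k \<in> carrier (Symp \<rho>)" and gC: "g \<in> carrier (Symp \<rho>)"
    and qC: "compose S2 k g \<in> carrier (Symp \<rho>)"
    and kk: "\<And>x. x \<in> S2 \<Longrightarrow> k (k x) = x" and gg: "\<And>x. x \<in> S2 \<Longrightarrow> g (g x) = x"
    and kg: "\<And>x. x \<in> S2 \<Longrightarrow> k (g x) = g (k x)"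
    and fk: "finite (Fix k)" and fg: "finite (Fix g)"
    and fq: "compose S2 k g \<noteq> restrict id S2 \<Longrightarrow> finite (Fix (compose S2 k g))"
    and a: "a \<in> S2" and ka: "k a = a" and ga: "g a = a"
  shows "k = g"
proof -
  define q where "q = compose S2 k g"
  have kS: "\<And>x. x \<in> S2 \<Longrightarrow> k x \<in> S2" using carrier_SympD(2)[OF kC] bij_betwE by blast
  have gS: "\<And>x. x \<in> S2 \<Longrightarrow> g x \<in> S2" using carrier_SympD(2)[OF gC] bij_betwE by blast
  have qx: "\<And>x. x \<in> S2 \<Longrightarrow> q x = k (g x)" by (simp add: q_def compose_eq)
  have qS: "\<And>x. x \<in> S2 \<Longrightarrow> q x \<in> S2" using qx kS gS by simp
  have qq: "q (q x) = x" if x: "x \<in> S2" for x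
  proof -
    have "q (q x) = k (g (k (g x)))" using qx qS x by simp
    also have "\<dots> = k (k (g (g x)))" using kg gS x by simp
    finally show ?thesis using kk gg gS x by simp
  qed
  obtain Uk K where extk: "smooth_ext Uk K k" and areak: "\<And>u v. u \<bullet> a = 0 \<Longrightarrow> v \<bullet> a = 0 \<Longrightarrow>
       a \<bullet> cross3 (frechet_derivative K (at a) u) (frechet_derivative K (at a) v) = a \<bullet> cross3 u v"
    using preserves_form_at_fixpoint[OF carrier_SympD(3)[OF kC] vd a ka] by blast
  obtain Ug G where extg: "smooth_ext Ug G g" and areag: "\<And>u v. u \<bullet> a = 0 \<Longrightarrow> v \<bullet> a = 0 \<Longrightarrow>
       a \<bullet> cross3 (frechet_derivative G (at a) u) (frechet_derivative G (at a) v) = a \<bullet> cross3 u v"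
    using preserves_form_at_fixpoint[OF carrier_SympD(3)[OF gC] vd a ga] by blast
  obtain Uq Q where extq: "smooth_ext Uq Q q"
    using carrier_SympD(3)[OF qC[folded q_def]] unfolding preserves_form_def by blast
  have Dq: "frechet_derivative Q (at a) u = u" if u: "u \<bullet> a = 0" for u
  proof -
    have "linear (frechet_derivative K (at a))"
      using smooth_ext_has_derivative[OF extk] smooth_extD(2)[OF extk] a has_derivative_linear by blast
    moreover have "frechet_derivative G (at a) u = - u"
      using tangent_derivative_eq_minus[OF extg gS gg a ga fg areag u] .
    moreover have "frechet_derivative K (at a) u = - u"
      using tangent_derivative_eq_minus[OF extk kS kk a ka fk areak u] .
    ultimately show ?thesis
      using derivative_compose_at_fixpoint[OF extk extg extq qx gS a ga u] by (simp add: linear_neg)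
  qed
  have "q a = a" using qx a ka ga by simp
  then have "q = restrict id S2"
    using infinite_Fix_if_tangent_derivative_id[OF extq qS qq a _ Dq] fq by (auto simp: q_def)
  then have kg_id: "k (g x) = x" if "x \<in> S2" for x using qx that by simp
  show "k = g"
  proof (rule extensionalityI[OF carrier_SympD(1)[OF kC] carrier_SympD(1)[OF gC]])
    fix x assume "x \<in> S2"
    then show "k x = g x" using kg_id[of "g x"] gg gS by simp
  qed
qed

section \<open>Abelian pseudo-rotation groups\<close>

locale abelian_pseudo_rotation_group =
  fixes \<rho> :: "real^3 \<Rightarrow> real" and G :: "(real^3 \<Rightarrow> real^3) set"
  assumes volume_density: "volume_density \<rho>"
    and pseudo_rotation: "pseudo_rotation_group \<rho> G"
    and commutes: "\<forall>g\<in>G. \<forall>h\<in>G. g \<otimes>\<^bsub>Symp \<rho>\<^esub> h = h \<otimes>\<^bsub>Symp \<rho>\<^esub> g"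
begin

lemma subgroup_G: "subgroup G (Symp \<rho>)"
  using pseudo_rotation by (simp add: pseudo_rotation_group_def)

lemma in_carrier: "g \<in> G \<Longrightarrow> g \<in> carrier (Symp \<rho>)"
  using subgroup.subset[OF subgroup_G] by blast

lemma one_in_G: "\<one>\<^bsub>Symp \<rho>\<^esub> \<in> G"
  using subgroup.one_closed[OF subgroup_G] .

lemma compose_in_G: "g \<in> G \<Longrightarrow> h \<in> G \<Longrightarrow> compose S2 g h \<in> G"
  using subgroup.m_closed[OF subgroup_G, of g h] by (simp add: mult_Symp)

lemma maps_S2: "g \<in> G \<Longrightarrow> x \<in> S2 \<Longrightarrow> g x \<in> S2"
  using bij_betwE[OF carrier_SympD(2)[OF in_carrier]] by blast

lemma inj_on_S2: "g \<in> G \<Longrightarrow> inj_on g S2"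
  using bij_betw_imp_inj_on[OF carrier_SympD(2)[OF in_carrier]] .

lemma commute_apply: "g \<in> G \<Longrightarrow> h \<in> G \<Longrightarrow> x \<in> S2 \<Longrightarrow> g (h x) = h (g x)"
  using commutes compose_eq[of x S2 g h] compose_eq[of x S2 h g] by (simp add: mult_Symp)

lemma eqI: "g \<in> G \<Longrightarrow> h \<in> G \<Longrightarrow> (\<And>x. x \<in> S2 \<Longrightarrow> g x = h x) \<Longrightarrow> g = h"
  using extensionalityI[OF carrier_SympD(1)[OF in_carrier] carrier_SympD(1)[OF in_carrier]] by blast

lemma card_Fix: "g \<in> G \<Longrightarrow> g \<noteq> \<one>\<^bsub>Symp \<rho>\<^esub> \<Longrightarrow> finite (Fix g) \<and> card (Fix g) = 2"
  using pseudo_rotation by (simp add: pseudo_rotation_group_def)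

lemma Fix_invariant: "g \<in> G \<Longrightarrow> h \<in> G \<Longrightarrow> x \<in> Fix g \<Longrightarrow> h x \<in> Fix g"
  using commute_apply[of g h x] maps_S2[of h x] by (auto simp: Fix_def)

lemma distinct_Fix_moves:
  assumes g: "g \<in> G" "g \<noteq> \<one>\<^bsub>Symp \<rho>\<^esub>" and h: "h \<in> G" "h \<noteq> \<one>\<^bsub>Symp \<rho>\<^esub>"
    and ne: "Fix g \<noteq> Fix h" and x: "x \<in> Fix g"
  shows "h x \<noteq> x"
proof
  assume hx: "h x = x"
  have "Fix g \<subseteq> Fix h"
  proof
    fix y assume y: "y \<in> Fix g"
    have "h y = y"
    proof (cases "y = x")
      case False
      then have "Fix g = {x, y}" using card_Fix[OF g] x y by (simp add: card_2_eq_doubleton)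
      moreover have "h y \<noteq> h x"
        using inj_on_S2[OF h(1)] x y False Fix_subset_S2 by (meson inj_onD subsetD)
      ultimately show ?thesis using Fix_invariant[OF g(1) h(1) y] hx by auto
    qed (use hx in simp)
    then show "y \<in> Fix h" using y by (simp add: Fix_def)
  qed
  then show False using card_Fix[OF g] card_Fix[OF h] ne by (simp add: card_subset_eq)
qed

lemma distinct_Fix_disjoint:
  assumes "g \<in> G" "g \<noteq> \<one>\<^bsub>Symp \<rho>\<^esub>" "h \<in> G" "h \<noteq> \<one>\<^bsub>Symp \<rho>\<^esub>" "Fix g \<noteq> Fix h"
  shows "Fix g \<inter> Fix h = {}"
  using distinct_Fix_moves[OF assms] by (auto simp: Fix_def)

lemma distinct_Fix_swap:
  assumes "g \<in> G" "g \<noteq> \<one>\<^bsub>Symp \<rho>\<^esub>" "h \<in> G" "h \<noteq> \<one>\<^bsub>Symp \<rho>\<^esub>" "Fix g \<noteq> Fix h" "x \<in> Fix g"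
  shows "Fix g = {x, h x}"
  using card_Fix[OF assms(1,2)] distinct_Fix_moves[OF assms] Fix_invariant[OF assms(1,3,6)] assms(6)
  by (simp add: card_2_eq_doubleton)

lemma distinct_Fix_involution:
  assumes g: "g \<in> G" "g \<noteq> \<one>\<^bsub>Symp \<rho>\<^esub>" and h: "h \<in> G" "h \<noteq> \<one>\<^bsub>Symp \<rho>\<^esub>"
    and ne: "Fix g \<noteq> Fix h" and x: "x \<in> S2"
  shows "h (h x) = x"
proof -
  define hh where "hh = compose S2 h h"
  have hh_apply: "y \<in> S2 \<Longrightarrow> hh y = h (h y)" for y by (simp add: hh_def compose_eq)
  have "Fix g \<subseteq> Fix hh"
  proof
    fix y assume y: "y \<in> Fix g"
    have "h y \<in> Fix g" using Fix_invariant[OF g(1) h(1) y] .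
    then have "Fix g = {h y, h (h y)}" "h (h y) \<noteq> h y"
      using distinct_Fix_swap[OF g h ne] distinct_Fix_moves[OF g h ne] by auto
    then have "h (h y) = y" using distinct_Fix_swap[OF g h ne y] by (metis doubleton_eq_iff)
    then show "y \<in> Fix hh" using y hh_apply by (simp add: Fix_def)
  qed
  moreover have "Fix h \<subseteq> Fix hh" using hh_apply by (auto simp: Fix_def)
  moreover have "card (Fix g \<union> Fix h) = 4"
    using card_Fix[OF g] card_Fix[OF h] distinct_Fix_disjoint[OF g h ne] by (simp add: card_Un_disjoint)
  ultimately have "hh = \<one>\<^bsub>Symp \<rho>\<^esub>"
    using card_Fix[OF compose_in_G[OF h(1) h(1)]] card_mono[of "Fix hh" "Fix g \<union> Fix h"]
    by (fastforce simp: hh_def)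
  then show ?thesis using hh_apply x by (simp add: one_Symp)
qed

lemma common_fixpoint_eq:
  assumes k: "k \<in> G" "k \<noteq> \<one>\<^bsub>Symp \<rho>\<^esub>" and x: "x \<in> G" "x \<noteq> \<one>\<^bsub>Symp \<rho>\<^esub>"
    and y: "y \<in> G" "y \<noteq> \<one>\<^bsub>Symp \<rho>\<^esub>" "Fix y \<noteq> Fix k"
    and common: "a \<in> Fix k" "a \<in> Fix x"
  shows "k = x"
proof (rule Symp_involutions_common_fixpoint_eq[OF volume_density
    in_carrier[OF k(1)] in_carrier[OF x(1)] in_carrier[OF compose_in_G[OF k(1) x(1)]]])
  have "Fix k = Fix x" using distinct_Fix_disjoint[OF k x] common by blast
  then show "\<And>z. z \<in> S2 \<Longrightarrow> k (k z) = z" "\<And>z. z \<in> S2 \<Longrightarrow> x (x z) = z"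
    using distinct_Fix_involution[OF y(1,2)] k x y(3) by auto
  show "\<And>z. z \<in> S2 \<Longrightarrow> k (x z) = x (k z)" using commute_apply[OF k(1) x(1)] .
  show "finite (Fix k)" "finite (Fix x)" using card_Fix k x by auto
  show "compose S2 k x \<noteq> restrict id S2 \<Longrightarrow> finite (Fix (compose S2 k x))"
    using card_Fix[OF compose_in_G[OF k(1) x(1)]] by (simp add: one_Symp)
  show "a \<in> S2" "k a = a" "x a = a" using common by (auto simp: Fix_def)
qed

end

locale distinct_fixpoint_pair = abelian_pseudo_rotation_group +
  fixes g h
  assumes g: "g \<in> G" "g \<noteq> \<one>\<^bsub>Symp \<rho>\<^esub>" and h: "h \<in> G" "h \<noteq> \<one>\<^bsub>Symp \<rho>\<^esub>"
    and Fix_ne: "Fix g \<noteq> Fix h"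
begin

lemma involution:
  assumes k: "k \<in> G" and x: "x \<in> S2"
  shows "k (k x) = x"
proof (cases "k = \<one>\<^bsub>Symp \<rho>\<^esub>")
  case True
  then show ?thesis using x by (simp add: one_Symp_apply)
next
  case False
  show ?thesis
  proof (cases "Fix g = Fix k")
    case True
    then show ?thesis using distinct_Fix_involution[OF h k False _ x] Fix_ne by simp
  qed (rule distinct_Fix_involution[OF g k False _ x])
qed

lemma nontrivial_Fix_disjoint:
  assumes k: "k \<in> G" "k \<noteq> \<one>\<^bsub>Symp \<rho>\<^esub>" and k': "k' \<in> G" "k' \<noteq> \<one>\<^bsub>Symp \<rho>\<^esub>" and "k \<noteq> k'"
  shows "Fix k \<inter> Fix k' = {}"
proof (rule ccontr)
  assume "Fix k \<inter> Fix k' \<noteq> {}"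
  then obtain a where "a \<in> Fix k" "a \<in> Fix k'" by blast
  moreover have "Fix g \<noteq> Fix k \<or> Fix h \<noteq> Fix k" using Fix_ne by auto
  ultimately have "k = k'" using common_fixpoint_eq[OF k k' g] common_fixpoint_eq[OF k k' h] by blast
  then show False using \<open>k \<noteq> k'\<close> by simp
qed

lemma compose_eq_one_imp_eq:
  assumes k: "k \<in> G" and k': "k' \<in> G" and one: "compose S2 k k' = \<one>\<^bsub>Symp \<rho>\<^esub>"
  shows "k = k'"
proof (rule eqI[OF k k'])
  have kk': "k (k' y) = y" if y: "y \<in> S2" for y
    using one compose_eq[OF y, of k k'] y by (simp add: one_Symp_apply)
  fix x assume x: "x \<in> S2"
  show "k x = k' x" using kk'[OF maps_S2[OF k' x]] involution[OF k' x] by simp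
qed

lemma compose_distinct:
  "compose S2 g h \<noteq> \<one>\<^bsub>Symp \<rho>\<^esub>" "compose S2 g h \<noteq> g" "compose S2 g h \<noteq> h"
proof -
  show "compose S2 g h \<noteq> \<one>\<^bsub>Symp \<rho>\<^esub>" using compose_eq_one_imp_eq g h Fix_ne by blast
  show "compose S2 g h \<noteq> g"
  proof
    assume gh: "compose S2 g h = g"
    have "h x = \<one>\<^bsub>Symp \<rho>\<^esub> x" if x: "x \<in> S2" for x
    proof -
      have "g (h x) = g x" using gh compose_eq[OF x, of g h] by simp
      then show ?thesis using involution[OF g(1) maps_S2[OF h(1) x]] involution[OF g(1) x] x
        by (metis one_Symp_apply)
    qed
    then show False using eqI[OF h(1) one_in_G] h(2) by blast
  qed
  show "compose S2 g h \<noteq> h"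
  proof
    assume gh: "compose S2 g h = h"
    have "g x = \<one>\<^bsub>Symp \<rho>\<^esub> x" if x: "x \<in> S2" for x
    proof -
      have "h (g x) = h x" using gh compose_eq[OF x, of g h] commute_apply[OF g(1) h(1) x] by simp
      then show ?thesis using involution[OF h(1) maps_S2[OF g(1) x]] involution[OF h(1) x] x
        by (metis one_Symp_apply)
    qed
    then show False using eqI[OF g(1) one_in_G] g(2) by blast
  qed
qed

text \<open>A fourth non-trivial element k moves a fixed point a of g to the same point as h does, so the
  product of h and k fixes a and must be g.\<close>
lemma G_eq: "G = {\<one>\<^bsub>Symp \<rho>\<^esub>, g, h, compose S2 g h}"
proof -
  have "k = compose S2 g h" if k: "k \<in> G" "k \<noteq> \<one>\<^bsub>Symp \<rho>\<^esub>" "k \<noteq> g" "k \<noteq> h" for k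
  proof -
    obtain a where a: "a \<in> Fix g" using card_Fix[OF g] by fastforce
    have "a \<notin> Fix k" "a \<notin> Fix h"
      using nontrivial_Fix_disjoint[OF k(1,2) g] nontrivial_Fix_disjoint[OF h g] k(3) Fix_ne a by auto
    then have "Fix g \<noteq> Fix k" "Fix g \<noteq> Fix h" using a by auto
    then have "Fix g = {a, k a}" "Fix g = {a, h a}" "k a \<noteq> a" "h a \<noteq> a"
      using distinct_Fix_swap[OF g k(1,2) _ a] distinct_Fix_swap[OF g h _ a]
        distinct_Fix_moves[OF g k(1,2) _ a] distinct_Fix_moves[OF g h _ a] by auto
    then have "k a = h a" by (metis doubleton_eq_iff)
    define m where "m = compose S2 h k"
    have "m \<in> G" using compose_in_G[OF h(1) k(1)] by (simp add: m_def)
    moreover have "m \<noteq> \<one>\<^bsub>Symp \<rho>\<^esub>" using compose_eq_one_imp_eq[OF h(1) k(1)] k(4) by (auto simp: m_def)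
    moreover have "a \<in> S2" using a by (simp add: Fix_def)
    then have "a \<in> Fix m"
      using \<open>k a = h a\<close> involution[OF h(1)] by (simp add: m_def Fix_def compose_eq)
    ultimately have "m = g" using nontrivial_Fix_disjoint[OF _ _ g] a by blast
    show ?thesis
    proof (rule eqI[OF k(1) compose_in_G[OF g(1) h(1)]])
      fix x assume x: "x \<in> S2"
      have "k x = h (m x)" using involution[OF h(1) maps_S2[OF k(1) x]] x by (simp add: m_def compose_eq)
      then show "k x = compose S2 g h x"
        using \<open>m = g\<close> commute_apply[OF g(1) h(1) x] x by (simp add: compose_eq)
    qed
  qed
  then show ?thesis using one_in_G g h compose_in_G[OF g(1) h(1)] by blast
qed

lemma compose_self: "k \<in> G \<Longrightarrow> compose S2 k k = \<one>\<^bsub>Symp \<rho>\<^esub>"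
  using eqI[OF compose_in_G one_in_G] involution by (simp add: compose_eq one_Symp_apply)

lemma comm_group: "comm_group ((Symp \<rho>)\<lparr>carrier := G\<rparr>)"
proof (rule comm_groupI; simp add: mult_Symp)
  show "\<And>x y. x \<in> G \<Longrightarrow> y \<in> G \<Longrightarrow> compose S2 x y \<in> G" by (rule compose_in_G)
  show "\<one>\<^bsub>Symp \<rho>\<^esub> \<in> G" by (rule one_in_G)
  show "compose S2 (compose S2 x y) z = compose S2 x (compose S2 y z)" if "z \<in> G" for x y z
    using compose_assoc[of z S2 S2 x y] maps_S2[OF that] by (simp add: Pi_iff)
  show "\<And>x y. x \<in> G \<Longrightarrow> y \<in> G \<Longrightarrow> compose S2 x y = compose S2 y x"
    using commutes by (simp add: mult_Symp)
  show "\<And>x. x \<in> G \<Longrightarrow> compose S2 \<one>\<^bsub>Symp \<rho>\<^esub> x = x"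
    using eqI[OF compose_in_G[OF one_in_G]] maps_S2 by (simp add: compose_eq one_Symp_apply)
  show "\<And>x. x \<in> G \<Longrightarrow> \<exists>y\<in>G. compose S2 y x = \<one>\<^bsub>Symp \<rho>\<^esub>"
    using compose_self by blast
qed

lemma Klein_iso: "(Symp \<rho>)\<lparr>carrier := G\<rparr> \<cong> DirProd (integer_mod_group 2) (integer_mod_group 2)"
  by (rule comm_group.Klein_four_iso[OF comm_group])
    (use g h Fix_ne G_eq compose_self in \<open>auto simp: mult_Symp\<close>)

lemma card_Union_Fix:
  "finite (\<Union>k\<in>G - {\<one>\<^bsub>Symp \<rho>\<^esub>}. Fix k) \<and> card (\<Union>k\<in>G - {\<one>\<^bsub>Symp \<rho>\<^esub>}. Fix k) = 6"
proof -
  define p where "p = compose S2 g h"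
  have p: "p \<in> G" "p \<noteq> \<one>\<^bsub>Symp \<rho>\<^esub>" "p \<noteq> g" "p \<noteq> h"
    using compose_in_G[OF g(1) h(1)] compose_distinct by (simp_all add: p_def)
  have "g \<noteq> h" using Fix_ne by blast
  have "(\<Union>k\<in>G - {\<one>\<^bsub>Symp \<rho>\<^esub>}. Fix k) = Fix g \<union> Fix h \<union> Fix p"
    using G_eq g h p by (auto simp: p_def)
  moreover have "Fix g \<inter> Fix h = {}" "(Fix g \<union> Fix h) \<inter> Fix p = {}"
    using nontrivial_Fix_disjoint g h p \<open>g \<noteq> h\<close> by blast+
  ultimately show ?thesis
    using card_Fix[OF g] card_Fix[OF h] card_Fix[OF p(1,2)] by (simp add: card_Un_disjoint)
qed

end

theorem lemma5p9:
  fixes \<rho> :: "real^3 \<Rightarrow> real" and G :: "(real^3 \<Rightarrow> real^3) set"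
  assumes "volume_density \<rho>"
    and "pseudo_rotation_group \<rho> G"
    and "\<forall>g\<in>G. \<forall>h\<in>G. g \<otimes>\<^bsub>Symp \<rho>\<^esub> h = h \<otimes>\<^bsub>Symp \<rho>\<^esub> g"
  shows "(\<exists>F. \<forall>g\<in>G. g \<noteq> \<one>\<^bsub>Symp \<rho>\<^esub> \<longrightarrow> Fix g = F)
       \<or> ((Symp \<rho>)\<lparr>carrier := G\<rparr> \<cong> DirProd (integer_mod_group 2) (integer_mod_group 2)
          \<and> (\<forall>g\<in>G. \<forall>h\<in>G. g \<noteq> \<one>\<^bsub>Symp \<rho>\<^esub> \<longrightarrow> h \<noteq> \<one>\<^bsub>Symp \<rho>\<^esub> \<longrightarrow> g \<noteq> h
                \<longrightarrow> Fix g \<inter> Fix h = {})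
          \<and> finite (\<Union>g\<in>G - {\<one>\<^bsub>Symp \<rho>\<^esub>}. Fix g)
          \<and> card (\<Union>g\<in>G - {\<one>\<^bsub>Symp \<rho>\<^esub>}. Fix g) = 6)"
proof (cases "\<forall>g\<in>G. \<forall>h\<in>G. g \<noteq> \<one>\<^bsub>Symp \<rho>\<^esub> \<longrightarrow> h \<noteq> \<one>\<^bsub>Symp \<rho>\<^esub> \<longrightarrow> Fix g = Fix h")
  case True
  then show ?thesis by metis
next
  case False
  then obtain g h where "g \<in> G" "g \<noteq> \<one>\<^bsub>Symp \<rho>\<^esub>" "h \<in> G" "h \<noteq> \<one>\<^bsub>Symp \<rho>\<^esub>" "Fix g \<noteq> Fix h"
    by blast
  then interpret distinct_fixpoint_pair \<rho> G g h
    using assms by unfold_locales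
  show ?thesis using Klein_iso nontrivial_Fix_disjoint card_Union_Fix by blast
qed

end
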